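(* Let $f:\mathbb{S}^1\to\mathbb{S}^1$ be an orientation-preserving homeomorphism with rational Poincaré rotation number which is not topologically conjugate to a rotation. Then $h_{\mathrm{pol}}(C(f))\ge 2$.
   Context: $C(\mathbb{S}^1)$ is the set of all nonempty closed connected subsets of $\mathbb{S}^1$ with the Hausdorff metric $d_H(A,B)=\inf\{\varepsilon>0: A\subset U(B,\varepsilon),\ B\subset U(A,\varepsilon)\}$, $U(A,\varepsilon)=\{x: d(x,A)<\varepsilon\}$; $C(f)(A)=f(A)$. For a continuous map $g:Z\to Z$ of a compact metric space $(Z,\rho)$, define $\rho^g_n(x,y)=\max_{0\le k\le n-1}\rho(g^k(x),g^k(y))$; a finite set $E\subset Z$ is $(n,\varepsilon)$-separated if $\rho^g_n(x,y)\ge\varepsilon$ for all distinct $x,y\in E$; $\mathrm{sep}(n,\varepsilon)$ is the maximal cardinality of such a set; and $h_{\mathrm{pol}}(g)=\lim_{\varepsilon\to0}\limsup_{n\to\infty}\frac{\log \mathrm{sep}(n,\varepsilon)}{\log n}$. *)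

theory Defs
  imports "HOL-Analysis.Analysis"
begin

definition circle :: "complex set" where
  "circle = sphere 0 1"

definition is_lift :: "(real \<Rightarrow> real) \<Rightarrow> (complex \<Rightarrow> complex) \<Rightarrow> bool" where
  "is_lift F f \<longleftrightarrow> continuous_on UNIV F \<and> (\<forall>t. F (t + 1) = F t + 1) \<and>
     (\<forall>t. f (cis (2 * pi * t)) = cis (2 * pi * F t))"

definition orient_pres_homeo :: "(complex \<Rightarrow> complex) \<Rightarrow> bool" where
  "orient_pres_homeo f \<longleftrightarrow> (\<exists>g. homeomorphism circle circle f g) \<and>
     (\<exists>F. is_lift F f \<and> strict_mono F)"

definition rational_rotation_number :: "(complex \<Rightarrow> complex) \<Rightarrow> bool" where
  "rational_rotation_number f \<longleftrightarrow>
     (\<exists>F r. is_lift F f \<and> strict_mono F \<and> ((\<lambda>n. (F ^^ n) 0 / real n) \<longlonglongrightarrow> r) \<and> r \<in> \<rat>)"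

definition conj_to_rotation :: "(complex \<Rightarrow> complex) \<Rightarrow> bool" where
  "conj_to_rotation f \<longleftrightarrow> (\<exists>h h' \<alpha>. homeomorphism circle circle h h' \<and>
     (\<forall>z\<in>circle. h (f z) = cis (2 * pi * \<alpha>) * h z))"

definition C_circle :: "complex set set" where
  "C_circle = {A. A \<subseteq> circle \<and> A \<noteq> {} \<and> closed A \<and> connected A}"

definition nbhd :: "complex set \<Rightarrow> real \<Rightarrow> complex set" where
  "nbhd A \<epsilon> = {x. infdist x A < \<epsilon>}"

definition hausdorff_dist :: "complex set \<Rightarrow> complex set \<Rightarrow> real" where
  "hausdorff_dist A B = Inf {\<epsilon>. \<epsilon> > 0 \<and> A \<subseteq> nbhd B \<epsilon> \<and> B \<subseteq> nbhd A \<epsilon>}"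

definition induced_map :: "(complex \<Rightarrow> complex) \<Rightarrow> complex set \<Rightarrow> complex set" where
  "induced_map f A = f ` A"

definition dyn_dist :: "('a \<Rightarrow> 'a \<Rightarrow> real) \<Rightarrow> ('a \<Rightarrow> 'a) \<Rightarrow> nat \<Rightarrow> 'a \<Rightarrow> 'a \<Rightarrow> real" where
  "dyn_dist \<rho> g n x y = (MAX k\<in>{..<n}. \<rho> ((g ^^ k) x) ((g ^^ k) y))"

definition separated_set :: "'a set \<Rightarrow> ('a \<Rightarrow> 'a \<Rightarrow> real) \<Rightarrow> ('a \<Rightarrow> 'a) \<Rightarrow> nat \<Rightarrow> real \<Rightarrow> 'a set \<Rightarrow> bool" where
  "separated_set Z \<rho> g n \<epsilon> E \<longleftrightarrow> E \<subseteq> Z \<and> finite E \<and>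
     (\<forall>x\<in>E. \<forall>y\<in>E. x \<noteq> y \<longrightarrow> dyn_dist \<rho> g n x y \<ge> \<epsilon>)"

definition sep :: "'a set \<Rightarrow> ('a \<Rightarrow> 'a \<Rightarrow> real) \<Rightarrow> ('a \<Rightarrow> 'a) \<Rightarrow> nat \<Rightarrow> real \<Rightarrow> nat" where
  "sep Z \<rho> g n \<epsilon> = Sup {card E | E. separated_set Z \<rho> g n \<epsilon> E}"

definition pol_entropy :: "'a set \<Rightarrow> ('a \<Rightarrow> 'a \<Rightarrow> real) \<Rightarrow> ('a \<Rightarrow> 'a) \<Rightarrow> ereal" where
  "pol_entropy Z \<rho> g = Lim (at_right 0)
     (\<lambda>\<epsilon>. limsup (\<lambda>n. ereal (ln (real (sep Z \<rho> g n \<epsilon>)) / ln (real n))))"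

end

theory Submission
  imports Defs
begin

(* Let p/q be the rotation number and F a lift of f.  Then G = F^q - p is a lift of f^q with
   rotation number 0, so G has a fixed point a; since f is not conjugate to a rotation, G is not
   the identity and some x in (a, a + 1) is moved.  Its two-sided G-orbit x_m is monotone and
   stays in (a, a + 1).  For i < M <= j < 2M the arcs from x_(-j) to x_(-i) are M^2 points of
   C(S^1); under f^(qk) they become the arcs from x_(k-j) to x_(k-i).  Two different such arcs are
   pulled a fixed distance apart before time 2qM: at time qi (resp. qj) one of them contains x_0
   (resp. x_(-1)) and the other lies beyond x_(-1) (resp. x_0).  Hence
   sep(n, eps) >= (n div 2q)^2 for small eps, and the polynomial entropy is at least 2. *)

section \<open>Circle maps and their lifts\<close>

definition circle_point :: "real \<Rightarrow> complex" where
  "circle_point t = cis (2 * pi * t)"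

lemma circle_point_in_circle [simp]: "circle_point t \<in> circle"
  by (simp add: circle_point_def circle_def)

lemma continuous_on_circle_point: "continuous_on S circle_point"
  unfolding circle_point_def by (intro continuous_intros)

lemma circle_point_add_int [simp]: "circle_point (t + of_int k) = circle_point t"
proof -
  have "cis (2 * pi * of_int k) = 1"
    by (rule cis_multiple_2pi) simp
  then show ?thesis
    by (simp add: circle_point_def distrib_left cis_mult[symmetric])
qed

lemma circle_point_eq_imp: "circle_point s = circle_point t \<Longrightarrow> \<exists>k::int. s = t + of_int k"
proof -
  assume "circle_point s = circle_point t"
  then have "exp (\<i> * of_real (2 * pi * s)) = exp (\<i> * of_real (2 * pi * t))"
    by (simp add: circle_point_def cis_conv_exp)
  then obtain n :: int
    where "\<i> * of_real (2 * pi * s) = \<i> * of_real (2 * pi * t) + of_int (2 * n) * pi * \<i>"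
    using exp_eq by blast
  then have "\<i> * of_real (2 * pi * s) = \<i> * of_real (2 * pi * t + of_int (2 * n) * pi)"
    by (simp add: algebra_simps)
  then have "2 * pi * s = 2 * pi * t + of_int (2 * n) * pi"
    using of_real_eq_iff by (metis mult_cancel_left complex_i_not_zero)
  then have "pi * (2 * s) = pi * (2 * (t + of_int n))"
    by (simp add: algebra_simps)
  then have "s = t + of_int n"
    by simp
  then show ?thesis ..
qed

lemma circle_point_Arg2pi: "z \<in> circle \<Longrightarrow> circle_point (Arg2pi z / (2 * pi)) = z"
  using complex_norm_eq_1_exp by (simp add: circle_def circle_point_def cis_conv_exp)

lemma circle_point_surj: "z \<in> circle \<Longrightarrow> \<exists>t\<in>{a..a + 1}. z = circle_point t"
proof -
  assume "z \<in> circle"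
  define s where "s = Arg2pi z / (2 * pi)"
  have "z = circle_point (s + of_int \<lceil>a - s\<rceil>)"
    using circle_point_Arg2pi[OF \<open>z \<in> circle\<close>] by (simp add: s_def)
  then show ?thesis
    by (intro bexI[of _ "s + of_int \<lceil>a - s\<rceil>"]) (simp_all, linarith+)
qed

lemma dist_circle_point: "dist (circle_point s) (circle_point t) = 2 * \<bar>sin (pi * (s - t))\<bar>"
proof -
  define x where "x = 2 * pi * (s - t)"
  have "circle_point s - circle_point t = cis (2 * pi * t) * (cis x - 1)"
    by (simp add: circle_point_def x_def cis_mult algebra_simps)
  then have "dist (circle_point s) (circle_point t) = cmod (cis x - 1)"
    by (simp add: dist_norm norm_mult)
  moreover have "(cmod (cis x - 1))\<^sup>2 = (2 * \<bar>sin (x / 2)\<bar>)\<^sup>2"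
  proof -
    have "(cmod (cis x - 1))\<^sup>2 = 2 - 2 * cos x"
      by (simp add: cmod_def power2_diff sin_squared_eq)
    then show ?thesis
      using cos_double_sin[of "x / 2"] by (simp add: power_mult_distrib)
  qed
  then have "cmod (cis x - 1) = 2 * \<bar>sin (x / 2)\<bar>"
    by (rule power2_eq_imp_eq) auto
  ultimately show ?thesis
    by (simp add: x_def)
qed

lemma abs_sin_pi_ge:
  assumes "0 \<le> \<delta>" "\<delta> \<le> \<bar>d\<bar>" "\<bar>d\<bar> \<le> 1 - \<delta>"
  shows "sin (pi * \<delta>) \<le> \<bar>sin (pi * d)\<bar>"
proof -
  have sin_le: "sin (pi * \<delta>) \<le> sin (pi * x)" if "\<delta> \<le> x" "x \<le> 1 / 2" for x
  proof (rule sin_monotone_2pi_le)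
    show "- (pi / 2) \<le> pi * \<delta>"
      using assms(1) by (simp add: order.trans[of _ 0])
    show "pi * \<delta> \<le> pi * x" "pi * x \<le> pi / 2"
      using that by simp_all
  qed
  have "\<bar>sin (pi * d)\<bar> = \<bar>sin (pi * \<bar>d\<bar>)\<bar>"
    by (cases "d \<ge> 0") simp_all
  also have "\<dots> = sin (pi * \<bar>d\<bar>)"
    using assms by (intro abs_of_nonneg sin_ge_zero) simp_all
  finally have "\<bar>sin (pi * d)\<bar> = sin (pi * \<bar>d\<bar>)" .
  moreover have "sin (pi * (1 - \<bar>d\<bar>)) = sin (pi * \<bar>d\<bar>)"
    using sin_pi_minus[of "pi * \<bar>d\<bar>"] by (simp add: algebra_simps)
  ultimately show ?thesis
    using assms sin_le[of "\<bar>d\<bar>"] sin_le[of "1 - \<bar>d\<bar>"] by (cases "\<bar>d\<bar> \<le> 1 / 2") auto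
qed

lemma dist_circle_point_ge:
  assumes "0 \<le> \<delta>" "\<delta> \<le> \<bar>s - t\<bar>" "\<bar>s - t\<bar> \<le> 1 - \<delta>"
  shows "2 * sin (pi * \<delta>) \<le> dist (circle_point s) (circle_point t)"
  using abs_sin_pi_ge[OF assms] by (simp add: dist_circle_point)

definition increasing_lift :: "(real \<Rightarrow> real) \<Rightarrow> bool" where
  "increasing_lift F \<longleftrightarrow> continuous_on UNIV F \<and> strict_mono F \<and> (\<forall>t. F (t + 1) = F t + 1)"

lemma increasing_lift_add_int:
  assumes "increasing_lift F"
  shows "F (t + of_int k) = F t + of_int k"
proof -
  have add_nat: "F (s + real n) = F s + real n" for s n
    using assms by (induction n arbitrary: s)
      (auto simp: increasing_lift_def add.assoc[symmetric] simp del: add.assoc)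
  show ?thesis
  proof (cases "k \<ge> 0")
    case True
    then show ?thesis using add_nat[of t "nat k"] by simp
  next
    case False
    then show ?thesis using add_nat[of "t + of_int k" "nat (- k)"] by simp
  qed
qed

lemma increasing_lift_funpow:
  assumes "increasing_lift F"
  shows "increasing_lift (F ^^ k)"
proof (induction k)
  case 0
  then show ?case by (simp add: increasing_lift_def strict_mono_def)
next
  case (Suc k)
  then show ?case
    using assms unfolding increasing_lift_def funpow_Suc_right strict_mono_def
    by (auto intro: continuous_on_compose2[where t = UNIV])
qed

lemma increasing_lift_diff_const:
  "increasing_lift F \<Longrightarrow> increasing_lift (\<lambda>t. F t - c)"
  unfolding increasing_lift_def strict_mono_def by (auto intro!: continuous_intros)

lemma increasing_lift_image_Icc:
  assumes "increasing_lift F" "x \<le> y"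
  shows "F ` {x..y} = {F x..F y}"
proof
  have "strict_mono F"
    using assms(1) by (simp add: increasing_lift_def)
  then show "F ` {x..y} \<subseteq> {F x..F y}"
    by (auto simp: strict_mono_less_eq)
  have "continuous_on {x..y} F"
    using assms(1) continuous_on_subset by (auto simp: increasing_lift_def)
  then show "{F x..F y} \<subseteq> F ` {x..y}"
    using IVT'[of F x _ y] assms(2) by force
qed

lemma increasing_lift_surj:
  assumes "increasing_lift F"
  shows "surj F"
proof -
  have "y \<in> F ` {y - of_int k..y + of_int k}" if "k = \<lceil>\<bar>F y - y\<bar>\<rceil>" for y k
  proof -
    have "F (y - of_int k) = F y - of_int k" "F (y + of_int k) = F y + of_int k"
      using increasing_lift_add_int[OF assms, of y "- k"] increasing_lift_add_int[OF assms, of y k]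
      by simp_all
    moreover have "\<bar>F y - y\<bar> \<le> of_int k"
      using that by linarith
    ultimately show ?thesis
      by (subst increasing_lift_image_Icc[OF assms]) auto
  qed
  then show ?thesis by blast
qed

lemma is_lift_funpow:
  assumes "is_lift F f"
  shows "(f ^^ k) (circle_point t) = circle_point ((F ^^ k) t)"
  using assms by (induction k) (auto simp: is_lift_def circle_point_def)

section \<open>Periodic lifts are conjugate to rotations\<close>

lemma continuous_on_circle_if_lift:
  assumes H: "continuous_on UNIV H" and "h ` circle \<subseteq> circle"
    and h: "\<And>t. h (circle_point t) = circle_point (H t)"
  shows "continuous_on circle h"
proof (rule continuous_from_closed_graph[of circle])
  have graph: "(\<lambda>z. (z, h z)) ` circle = (\<lambda>t. (circle_point t, circle_point (H t))) ` {0..1}"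
    using circle_point_surj[of _ 0] by (force simp: h)
  have "continuous_on {0..1} (\<lambda>t. (circle_point t, circle_point (H t)))"
    using H
    by (intro continuous_intros continuous_on_compose2[OF continuous_on_circle_point, of _ H])
      (auto intro: continuous_on_subset continuous_on_circle_point)
  then show "closed ((\<lambda>z. (z, h z)) ` circle)"
    unfolding graph by (intro compact_imp_closed compact_continuous_image) auto
qed (use assms in \<open>auto simp: circle_def\<close>)

lemma increasing_lift_homeomorphism:
  assumes H: "increasing_lift H"
  obtains h h' where "homeomorphism circle circle h h'"
    "\<And>t. h (circle_point t) = circle_point (H t)"
proof -
  define h where "h z = circle_point (H (Arg2pi z / (2 * pi)))" for z
  have h_circle_point: "h (circle_point t) = circle_point (H t)" for t
  proof -
    obtain k where "Arg2pi (circle_point t) / (2 * pi) = t + of_int k"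
      using circle_point_eq_imp circle_point_Arg2pi[of "circle_point t"] by auto
    then show ?thesis
      by (simp add: h_def increasing_lift_add_int[OF H])
  qed
  have image: "h ` circle = circle"
  proof
    show "h ` circle \<subseteq> circle"
      by (auto simp: h_def)
    show "circle \<subseteq> h ` circle"
    proof
      fix w assume "w \<in> circle"
      then obtain s where "w = circle_point s"
        using circle_point_surj by blast
      moreover obtain t where "H t = s"
        using increasing_lift_surj[OF H] by (metis surjD)
      ultimately show "w \<in> h ` circle"
        using h_circle_point by (metis circle_point_in_circle image_eqI)
    qed
  qed
  have "inj_on h circle"
  proof
    fix z w assume "z \<in> circle" "w \<in> circle" "h z = h w"
    then obtain s t where st: "z = circle_point s" "w = circle_point t"
      "circle_point (H s) = circle_point (H t)"
      using circle_point_surj h_circle_point by metis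
    then obtain k where "H s = H (t + of_int k)"
      using circle_point_eq_imp increasing_lift_add_int[OF H] by metis
    then have "s = t + of_int k"
      using H by (auto simp: increasing_lift_def strict_mono_eq)
    then show "z = w"
      using st by simp
  qed
  moreover have "continuous_on circle h"
    using H image h_circle_point
    by (intro continuous_on_circle_if_lift) (auto simp: increasing_lift_def)
  ultimately show ?thesis
    using homeomorphism_compact[of circle h circle] image that h_circle_point
    by (auto simp: circle_def)
qed

(* Average the iterates F^0, ..., F^(q-1): applying F shifts the sum by F^q t - t = p. *)
lemma periodic_lift_average:
  assumes F: "increasing_lift F" and "q > 0" and periodic: "\<And>t. (F ^^ q) t = t + of_int p"
  obtains H where "increasing_lift H" "\<And>t. H (F t) = H t + of_int p / real q"
proof
  define H where "H t = (\<Sum>k<q. (F ^^ k) t) / real q" for t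
  have Fk: "increasing_lift (F ^^ k)" for k
    by (rule increasing_lift_funpow[OF F])
  show "increasing_lift H"
    unfolding increasing_lift_def
  proof (intro conjI allI)
    show "continuous_on UNIV H"
      unfolding H_def using Fk \<open>q > 0\<close> by (intro continuous_intros) (auto simp: increasing_lift_def)
    show "strict_mono H"
    proof (rule strict_monoI)
      fix s t :: real assume "s < t"
      then have "(\<Sum>k<q. (F ^^ k) s) < (\<Sum>k<q. (F ^^ k) t)"
        using Fk \<open>q > 0\<close> by (intro sum_strict_mono) (auto simp: increasing_lift_def strict_mono_def)
      then show "H s < H t"
        unfolding H_def using \<open>q > 0\<close> by (simp add: divide_strict_right_mono)
    qed
    fix t
    have "(\<Sum>k<q. (F ^^ k) (t + 1)) = (\<Sum>k<q. (F ^^ k) t) + real q"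
      using Fk by (simp add: increasing_lift_def sum.distrib)
    then show "H (t + 1) = H t + 1"
      unfolding H_def using \<open>q > 0\<close> by (simp add: add_divide_distrib)
  qed
  fix t
  have "(\<Sum>k<q. (F ^^ k) (F t)) = (\<Sum>k<q. (F ^^ Suc k) t)"
    by (simp add: funpow_swap1)
  also have "\<dots> = (\<Sum>k<q. (F ^^ k) t) + of_int p"
    using sum.lessThan_Suc_shift[of "\<lambda>k. (F ^^ k) t" q] periodic[of t] by simp
  finally show "H (F t) = H t + of_int p / real q"
    unfolding H_def by (simp add: add_divide_distrib)
qed

lemma conj_to_rotation_if_periodic_lift:
  assumes lift: "is_lift F f" "increasing_lift F"
    and "q > 0" and "\<And>t. (F ^^ q) t = t + of_int p"
  shows "conj_to_rotation f"
proof -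
  obtain H where H: "increasing_lift H" "\<And>t. H (F t) = H t + of_int p / real q"
    using periodic_lift_average[OF lift(2) assms(3,4)] by blast
  obtain h h' where hom: "homeomorphism circle circle h h'"
    and h: "\<And>t. h (circle_point t) = circle_point (H t)"
    using increasing_lift_homeomorphism[OF H(1)] by blast
  have "h (f z) = cis (2 * pi * (of_int p / real q)) * h z" if z: "z \<in> circle" for z
  proof -
    obtain t where "z = circle_point t"
      using circle_point_surj[OF z] by blast
    moreover have "f (circle_point t) = circle_point (F t)"
      using is_lift_funpow[OF lift(1), of 1] by simp
    moreover have "circle_point (H t + of_int p / real q)
        = cis (2 * pi * (of_int p / real q)) * circle_point (H t)"
      by (simp add: circle_point_def cis_mult distrib_left add.commute)
    ultimately show ?thesis
      by (simp add: h H(2))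
  qed
  then show ?thesis
    unfolding conj_to_rotation_def using hom by blast
qed

section \<open>Rational rotation number\<close>

lemma funpow_displacement_ge:
  assumes "\<And>t. c \<le> G t - t"
  shows "real m * c \<le> (G ^^ m) t - t"
proof (induction m)
  case (Suc m)
  then show ?case using assms[of "(G ^^ m) t"] by (simp add: algebra_simps)
qed simp

lemma funpow_displacement_le:
  assumes "\<And>t. G t - t \<le> c"
  shows "(G ^^ m) t - t \<le> real m * c"
proof (induction m)
  case (Suc m)
  then show ?case using assms[of "(G ^^ m) t"] by (simp add: algebra_simps)
qed simp

(* G t - t is 1-periodic, so it attains a minimum and a maximum; the minimum is a lower and the
   maximum an upper bound for the rotation number 0, so G t - t changes sign. *)
lemma increasing_lift_fixed_point:
  assumes G: "increasing_lift G" and rot: "(\<lambda>m. (G ^^ m) 0 / real m) \<longlonglongrightarrow> 0"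
  shows "\<exists>s. G s = s"
proof -
  define \<phi> where "\<phi> t = G t - t" for t
  have cont: "continuous_on UNIV \<phi>"
    using G unfolding \<phi>_def increasing_lift_def by (intro continuous_intros) auto
  have periodic: "\<phi> t = \<phi> (t - of_int \<lfloor>t\<rfloor>)" for t
    using increasing_lift_add_int[OF G, of "t - of_int \<lfloor>t\<rfloor>" "\<lfloor>t\<rfloor>"] by (simp add: \<phi>_def)
  have image_unit_interval: "\<phi> t \<in> \<phi> ` {0..1}" for t
  proof -
    have "t - of_int \<lfloor>t\<rfloor> \<in> {0..1}"
      by simp linarith
    then show ?thesis
      using periodic by blast
  qed
  have compact: "compact {0..1::real}" "{0..1::real} \<noteq> {}" "continuous_on {0..1} \<phi>"
    using continuous_on_subset[OF cont] by auto
  obtain x where x: "\<And>t. \<phi> x \<le> \<phi> t"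
    using continuous_attains_inf[OF compact] image_unit_interval by (metis imageE)
  obtain z where z: "\<And>t. \<phi> t \<le> \<phi> z"
    using continuous_attains_sup[OF compact] image_unit_interval by (metis imageE)
  have "\<phi> x \<le> (G ^^ m) 0 / real m" if "m \<ge> 1" for m
  proof -
    have "real m * \<phi> x \<le> (G ^^ m) 0"
      using funpow_displacement_ge[of "\<phi> x" G m 0] x unfolding \<phi>_def by simp
    then show ?thesis
      using that by (simp add: pos_le_divide_eq mult.commute)
  qed
  then have "\<phi> x \<le> 0"
    by (intro LIMSEQ_le_const[OF rot]) auto
  have "(G ^^ m) 0 / real m \<le> \<phi> z" if "m \<ge> 1" for m
  proof -
    have "(G ^^ m) 0 \<le> real m * \<phi> z"
      using funpow_displacement_le[of G "\<phi> z" m 0] z unfolding \<phi>_def by simp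
    then show ?thesis
      using that by (simp add: pos_divide_le_eq mult.commute)
  qed
  then have "0 \<le> \<phi> z"
    by (intro LIMSEQ_le_const2[OF rot]) auto
  have "0 \<in> range \<phi>"
    by (rule connectedD_interval[OF connected_continuous_image[OF cont connected_UNIV] rangeI rangeI
          \<open>\<phi> x \<le> 0\<close> \<open>0 \<le> \<phi> z\<close>])
  then show ?thesis
    by (auto simp: \<phi>_def)
qed

lemma increasing_lift_funpow_diff_int:
  assumes "increasing_lift F"
  shows "((\<lambda>t. F t - of_int p) ^^ m) t = (F ^^ m) t - of_int (int m * p)"
proof (induction m)
  case (Suc m)
  have "F ((F ^^ m) t - of_int (int m * p)) = F ((F ^^ m) t) - of_int (int m * p)"
    using increasing_lift_add_int[OF increasing_lift_funpow[OF assms, of 1], of _ "- int m * p"]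
    by simp
  then show ?case
    by (simp add: Suc.IH algebra_simps)
qed simp

lemma rotation_number_funpow_diff_int:
  assumes F: "increasing_lift F" and "q > 0"
    and rot: "(\<lambda>n. (F ^^ n) 0 / real n) \<longlonglongrightarrow> of_int p / real q"
  shows "(\<lambda>m. ((\<lambda>t. (F ^^ q) t - of_int p) ^^ m) 0 / real m) \<longlonglongrightarrow> 0"
proof -
  have "(\<lambda>m. (F ^^ (q * m)) 0 / real (q * m)) \<longlonglongrightarrow> of_int p / real q"
    using LIMSEQ_subseq_LIMSEQ[OF rot, of "\<lambda>m. q * m"] \<open>q > 0\<close> by (simp add: strict_mono_def o_def)
  then have "(\<lambda>m. real q * ((F ^^ (q * m)) 0 / real (q * m)) - of_int p)
      \<longlonglongrightarrow> real q * (of_int p / real q) - of_int p"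
    by (intro tendsto_diff tendsto_mult tendsto_const)
  moreover have "\<forall>\<^sub>F m in sequentially. real q * ((F ^^ (q * m)) 0 / real (q * m)) - of_int p
      = ((\<lambda>t. (F ^^ q) t - of_int p) ^^ m) 0 / real m"
    using eventually_gt_at_top[of 0]
    by eventually_elim (use \<open>q > 0\<close> in
      \<open>simp add: increasing_lift_funpow_diff_int[OF increasing_lift_funpow[OF F]] funpow_mult field_simps\<close>)
  ultimately show ?thesis
    using \<open>q > 0\<close> by (simp add: tendsto_cong)
qed

lemma increasing_lift_fixed_point_below:
  assumes "increasing_lift G" "G s = s"
  obtains a where "G a = a" "a \<le> x" "x < a + 1"
proof
  show "G (s + of_int \<lfloor>x - s\<rfloor>) = s + of_int \<lfloor>x - s\<rfloor>"
    using increasing_lift_add_int[OF assms(1)] assms(2) by simp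
qed linarith+

lemma rational_rotation_number_reduction:
  assumes "rational_rotation_number f" and "\<not> conj_to_rotation f"
  obtains G q a x where "increasing_lift G" "q > 0"
    "\<And>m t. (f ^^ (q * m)) (circle_point t) = circle_point ((G ^^ m) t)"
    "G a = a" "a \<le> x" "x < a + 1" "G x \<noteq> x"
proof -
  obtain F r where lift: "is_lift F f" and "strict_mono F"
    and rot: "(\<lambda>n. (F ^^ n) 0 / real n) \<longlonglongrightarrow> r" and "r \<in> \<rat>"
    using assms(1) unfolding rational_rotation_number_def by blast
  then have F: "increasing_lift F"
    by (simp add: is_lift_def increasing_lift_def)
  obtain p b :: int where "b > 0" and r: "r = of_int p / of_int b"
    using Rats_cases'[OF \<open>r \<in> \<rat>\<close>] by metis
  define q where "q = nat b"
  have "q > 0" and "r = of_int p / real q"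
    using \<open>b > 0\<close> r by (simp_all add: q_def)
  define G where "G t = (F ^^ q) t - of_int p" for t
  have G: "increasing_lift G"
    unfolding G_def by (intro increasing_lift_diff_const increasing_lift_funpow F)
  have G_funpow: "(G ^^ m) t = (F ^^ (q * m)) t - of_int (int m * p)" for m t
    unfolding G_def[abs_def] funpow_mult[symmetric]
    by (rule increasing_lift_funpow_diff_int[OF increasing_lift_funpow[OF F]])
  have f_G: "(f ^^ (q * m)) (circle_point t) = circle_point ((G ^^ m) t)" for m t
    using circle_point_add_int[of "(G ^^ m) t" "int m * p"]
    by (simp only: is_lift_funpow[OF lift] G_funpow diff_add_cancel)
  obtain s where "G s = s"
    using increasing_lift_fixed_point[OF G] rotation_number_funpow_diff_int[OF F \<open>q > 0\<close>] rot
    unfolding G_def[abs_def] \<open>r = of_int p / real q\<close> by blast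
  have "\<exists>x. G x \<noteq> x"
  proof (rule ccontr)
    assume "\<nexists>x. G x \<noteq> x"
    then have "(F ^^ q) t = t + of_int p" for t
      by (metis G_def diff_eq_eq)
    then show False
      using conj_to_rotation_if_periodic_lift[OF lift F \<open>q > 0\<close>] assms(2) by blast
  qed
  then obtain x where "G x \<noteq> x" ..
  obtain a where "G a = a" "a \<le> x" "x < a + 1"
    using increasing_lift_fixed_point_below[OF G \<open>G s = s\<close>] by blast
  then show ?thesis
    using that[OF G \<open>q > 0\<close> f_G _ _ _ \<open>G x \<noteq> x\<close>] by blast
qed

lemma int_shift_invariant:
  fixes P :: "int \<Rightarrow> bool"
  assumes "\<And>m. P (m + 1) \<longleftrightarrow> P m"
  shows "P m \<longleftrightarrow> P 0"
proof (induction m rule: int_induct[where k = 0])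
  case (step2 i)
  then show ?case using assms[of "i - 1"] by simp
qed (use assms in simp_all)

lemma int_step_mono:
  fixes f :: "int \<Rightarrow> 'a::preorder"
  assumes step: "\<And>m. f m \<le> f (m + 1)" and "m \<le> n"
  shows "f m \<le> f n"
proof -
  have "f m \<le> f (m + int k)" for k
  proof (induction k)
    case (Suc k)
    have "f (m + int k) \<le> f (m + int (Suc k))"
      using step[of "m + int k"] by (simp add: ac_simps)
    with Suc.IH show ?case
      by (rule order_trans)
  qed simp
  from this[of "nat (n - m)"] show ?thesis
    using \<open>m \<le> n\<close> by simp
qed

lemma bij_two_sided_orbit:
  assumes "bij G"
  obtains orb :: "int \<Rightarrow> 'a" where "orb 0 = x" "\<And>m. orb (m + 1) = G (orb m)"
proof -
  define orb where "orb m = (if 0 \<le> m then (G ^^ nat m) x else (inv G ^^ nat (- m)) x)" for m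
  have "orb (m + 1) = G (orb m)" for m
  proof (cases "0 \<le> m")
    case True
    then have "nat (m + 1) = Suc (nat m)" by simp
    then show ?thesis using True by (simp add: orb_def)
  next
    case False
    then have "nat (- m) = Suc (nat (- (m + 1)))" by simp
    moreover have "G (inv G y) = y" for y
      using assms by (simp add: bij_is_surj surj_f_inv_f)
    ultimately show ?thesis
      using False by (auto simp: orb_def)
  qed
  moreover have "orb 0 = x"
    by (simp add: orb_def)
  ultimately show ?thesis
    using that[of orb] by blast
qed

lemma increasing_lift_monotone_orbit:
  assumes G: "increasing_lift G" and "G a = a" "a \<le> x" "x < a + 1" "G x \<noteq> x"
  obtains orb :: "int \<Rightarrow> real" where "\<And>m. orb (m + 1) = G (orb m)" "\<And>m. orb m \<in> {a<..<a + 1}"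
    "mono orb \<or> antimono orb" "orb (- 1) \<noteq> orb 0"
proof -
  have "strict_mono G"
    using G by (simp add: increasing_lift_def)
  then have less_iff: "G s < G t \<longleftrightarrow> s < t" for s t
    by (simp add: strict_mono_less)
  have "bij G"
    using increasing_lift_surj[OF G] strict_mono_imp_inj_on[OF \<open>strict_mono G\<close>]
    by (simp add: bij_def)
  obtain orb :: "int \<Rightarrow> real" where orb0: "orb 0 = x" and step: "\<And>m. orb (m + 1) = G (orb m)"
    using bij_two_sided_orbit[OF \<open>bij G\<close>, of x] by blast
  (* G is increasing and fixes a and a + 1, so each of the following order relations holds for
     all m as soon as it holds for m = 0. *)
  have "G (a + 1) = a + 1"
    using G \<open>G a = a\<close> by (simp add: increasing_lift_def)
  have "a < x"
    using \<open>a \<le> x\<close> \<open>G a = a\<close> \<open>G x \<noteq> x\<close> by (cases "a = x") auto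
  have lower: "a < orb m" for m
    using int_shift_invariant[of "\<lambda>m. a < orb m"] less_iff[of a] \<open>G a = a\<close> step orb0 \<open>a < x\<close> by auto
  have upper: "orb m < a + 1" for m
    using int_shift_invariant[of "\<lambda>m. orb m < a + 1"] less_iff[of _ "a + 1"] \<open>G (a + 1) = a + 1\<close>
      step orb0 \<open>x < a + 1\<close>
    by auto
  have up: "orb m < orb (m + 1) \<longleftrightarrow> x < G x" for m
    using int_shift_invariant[of "\<lambda>m. orb m < orb (m + 1)" m] orb0
    by (simp only: step less_iff)
  have down: "orb (m + 1) < orb m \<longleftrightarrow> G x < x" for m
    using int_shift_invariant[of "\<lambda>m. orb (m + 1) < orb m" m] orb0
    by (simp only: step less_iff)
  have monotone: "mono orb \<or> antimono orb"
  proof (cases "x < G x")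
    case True
    then show ?thesis
      using int_step_mono[of orb] up less_imp_le by (metis monoI)
  next
    case False
    then have "G x < x"
      using \<open>G x \<noteq> x\<close> by simp
    then show ?thesis
      using int_step_mono[of "\<lambda>m. - orb m"] down less_imp_le by (metis antimonoI neg_le_iff_le)
  qed
  have "orb (- 1) \<noteq> orb 0"
    using step[of "- 1"] orb0 \<open>G x \<noteq> x\<close> by auto
  then show ?thesis
    using that[OF step _ monotone] lower upper by simp
qed

section \<open>Hausdorff distance and separated sets\<close>

lemma hausdorff_dist_commute: "hausdorff_dist A B = hausdorff_dist B A"
  unfolding hausdorff_dist_def by (simp add: conj_commute)

lemma hausdorff_dist_le:
  assumes "0 \<le> c" and AB: "\<forall>x\<in>A. \<exists>y\<in>B. dist x y \<le> c" and BA: "\<forall>y\<in>B. \<exists>x\<in>A. dist y x \<le> c"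
  shows "hausdorff_dist A B \<le> c"
proof (rule dense_ge)
  fix \<epsilon> assume "c < \<epsilon>"
  have "A \<subseteq> nbhd B \<epsilon>" "B \<subseteq> nbhd A \<epsilon>"
    using AB BA \<open>c < \<epsilon>\<close> infdist_le2 by (fastforce simp: nbhd_def)+
  then show "hausdorff_dist A B \<le> \<epsilon>"
    unfolding hausdorff_dist_def using \<open>0 \<le> c\<close> \<open>c < \<epsilon>\<close>
    by (intro cInf_lower bdd_belowI[of _ 0]) auto
qed

lemma hausdorff_dist_ge:
  assumes "bounded A" "bounded B" and "w \<in> A" "B \<noteq> {}" and far: "\<forall>b\<in>B. c \<le> dist w b"
  shows "c \<le> hausdorff_dist A B"
  unfolding hausdorff_dist_def
proof (rule cInf_greatest)
  define D where "D = diameter (A \<union> B)"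
  have diam: "dist x y \<le> D" if "x \<in> A \<union> B" "y \<in> A \<union> B" for x y
    unfolding D_def using assms(1,2) that by (intro diameter_bounded_bound) auto
  have "infdist x Y < D + 1" if "x \<in> A \<union> B" "Y \<subseteq> A \<union> B" "Y \<noteq> {}" for x Y
  proof -
    obtain y where "y \<in> Y"
      using \<open>Y \<noteq> {}\<close> by blast
    then have "dist x y \<le> D"
      using diam that by blast
    then show ?thesis
      using infdist_le[OF \<open>y \<in> Y\<close>, of x] by linarith
  qed
  then have "A \<subseteq> nbhd B (D + 1)" "B \<subseteq> nbhd A (D + 1)"
    using \<open>w \<in> A\<close> \<open>B \<noteq> {}\<close> by (auto simp: nbhd_def)
  moreover have "0 < D + 1"
    using diam[of w w] \<open>w \<in> A\<close> by simp
  ultimately show "{\<epsilon>. 0 < \<epsilon> \<and> A \<subseteq> nbhd B \<epsilon> \<and> B \<subseteq> nbhd A \<epsilon>} \<noteq> {}"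
    by blast
  fix \<epsilon> assume "\<epsilon> \<in> {\<epsilon>. 0 < \<epsilon> \<and> A \<subseteq> nbhd B \<epsilon> \<and> B \<subseteq> nbhd A \<epsilon>}"
  then have "infdist w B < \<epsilon>"
    using \<open>w \<in> A\<close> by (auto simp: nbhd_def)
  moreover have "c \<le> infdist w B"
    unfolding infdist_notempty[OF \<open>B \<noteq> {}\<close>] using far \<open>B \<noteq> {}\<close> by (intro cINF_greatest) auto
  ultimately show "c \<le> \<epsilon>"
    by simp
qed

lemma induced_map_funpow: "(induced_map f ^^ k) A = (f ^^ k) ` A"
  by (induction k) (auto simp: induced_map_def image_image)

lemma dyn_dist_ge: "k < n \<Longrightarrow> c \<le> \<rho> ((g ^^ k) x) ((g ^^ k) y) \<Longrightarrow> c \<le> dyn_dist \<rho> g n x y"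
  unfolding dyn_dist_def by (subst Max_ge_iff) auto

lemma dyn_dist_less:
  "0 < n \<Longrightarrow> (\<And>k. k < n \<Longrightarrow> \<rho> ((g ^^ k) x) ((g ^^ k) y) < c) \<Longrightarrow> dyn_dist \<rho> g n x y < c"
  unfolding dyn_dist_def by (subst Max_less_iff) auto

lemma card_le_sep:
  assumes "bdd_above {card E | E. separated_set Z \<rho> g n \<epsilon> E}" and "separated_set Z \<rho> g n \<epsilon> E"
  shows "card E \<le> sep Z \<rho> g n \<epsilon>"
  unfolding sep_def using assms by (intro cSup_upper) auto

lemma sep_antimono:
  assumes "bdd_above {card E | E. separated_set Z \<rho> g n \<epsilon> E}" and "\<epsilon> \<le> \<epsilon>'"
  shows "sep Z \<rho> g n \<epsilon>' \<le> sep Z \<rho> g n \<epsilon>"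
  unfolding sep_def
proof (rule cSup_subset_mono)
  have "separated_set Z \<rho> g n \<epsilon>' {}"
    by (simp add: separated_set_def)
  then show "{card E | E. separated_set Z \<rho> g n \<epsilon>' E} \<noteq> {}"
    by blast
  show "{card E | E. separated_set Z \<rho> g n \<epsilon>' E} \<subseteq> {card E | E. separated_set Z \<rho> g n \<epsilon> E}"
    using \<open>\<epsilon> \<le> \<epsilon>'\<close> unfolding separated_set_def by (blast intro: order_trans)
qed (use assms(1) in simp)

(* No positivity hypothesis is needed because ln 0 = 0. *)
lemma ln_of_nat_mono: "m \<le> n \<Longrightarrow> ln (real m) \<le> ln (real n)"
  by (cases "m = 0"; cases "n = 0") simp_all

lemma antimono_tendsto_SUP_at_right:
  fixes \<phi> :: "real \<Rightarrow> 'a::{complete_linorder, linorder_topology}"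
  assumes antimono: "\<And>x y. 0 < x \<Longrightarrow> x \<le> y \<Longrightarrow> \<phi> y \<le> \<phi> x"
  shows "(\<phi> \<longlongrightarrow> (SUP x\<in>{0<..}. \<phi> x)) (at_right 0)"
proof (rule order_tendstoI)
  fix y assume "y < (SUP x\<in>{0<..}. \<phi> x)"
  then obtain x where "0 < x" "y < \<phi> x"
    by (auto simp: less_SUP_iff)
  have "\<forall>\<^sub>F x' in at_right 0. x' \<in> {0<..<x}"
    by (rule eventually_at_right_real[OF \<open>0 < x\<close>])
  then show "\<forall>\<^sub>F x' in at_right 0. y < \<phi> x'"
  proof eventually_elim
    case (elim x')
    then show ?case
      using antimono[of x' x] \<open>y < \<phi> x\<close> by auto
  qed
next
  fix y assume "(SUP x\<in>{0<..}. \<phi> x) < y"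
  have "\<forall>\<^sub>F x in at_right 0. 0 < (x::real)"
    by (rule eventually_at_right_less)
  then show "\<forall>\<^sub>F x in at_right 0. \<phi> x < y"
    by eventually_elim (use \<open>(SUP x\<in>{0<..}. \<phi> x) < y\<close> in \<open>auto intro: le_less_trans[OF SUP_upper]\<close>)
qed

lemma pol_entropy_ge:
  assumes bdd: "\<And>n \<epsilon>. 0 < n \<Longrightarrow> 0 < \<epsilon> \<Longrightarrow> bdd_above {card E | E. separated_set Z \<rho> g n \<epsilon> E}"
    and "0 < \<epsilon>" and lower: "L \<le> limsup (\<lambda>n. ereal (ln (real (sep Z \<rho> g n \<epsilon>)) / ln (real n)))"
  shows "L \<le> pol_entropy Z \<rho> g"
proof -
  define \<phi> where "\<phi> \<epsilon> = limsup (\<lambda>n. ereal (ln (real (sep Z \<rho> g n \<epsilon>)) / ln (real n)))" for \<epsilon>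
  have "\<phi> \<epsilon>' \<le> \<phi> \<epsilon>" if "0 < \<epsilon>" "\<epsilon> \<le> \<epsilon>'" for \<epsilon> \<epsilon>'
    unfolding \<phi>_def
  proof (intro Limsup_mono eventually_mono[OF eventually_gt_at_top[of 0]])
    fix n :: nat assume "0 < n"
    have "ln (real (sep Z \<rho> g n \<epsilon>')) \<le> ln (real (sep Z \<rho> g n \<epsilon>))"
      using sep_antimono[OF bdd[OF \<open>0 < n\<close> \<open>0 < \<epsilon>\<close>] \<open>\<epsilon> \<le> \<epsilon>'\<close>] by (rule ln_of_nat_mono)
    then show "ereal (ln (real (sep Z \<rho> g n \<epsilon>')) / ln (real n))
        \<le> ereal (ln (real (sep Z \<rho> g n \<epsilon>)) / ln (real n))"
      using ln_of_nat_mono[of 1 n] \<open>0 < n\<close> by (simp add: divide_right_mono)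
  qed
  then have "Lim (at_right 0) \<phi> = (SUP \<epsilon>\<in>{0<..}. \<phi> \<epsilon>)"
    by (intro tendsto_Lim antimono_tendsto_SUP_at_right) simp_all
  moreover have "L \<le> (SUP \<epsilon>\<in>{0<..}. \<phi> \<epsilon>)"
    using lower \<open>0 < \<epsilon>\<close> unfolding \<phi>_def by (auto intro: SUP_upper2)
  ultimately show ?thesis
    unfolding pol_entropy_def \<phi>_def by simp
qed

lemma real_div_nat_ge_half:
  assumes "0 < d" "d \<le> n"
  shows "real n / (2 * real d) \<le> real (n div d)"
proof -
  have "n < n div d * d + d"
    using div_mult_mod_eq[of n d] mod_less_divisor[OF \<open>0 < d\<close>, of n] by linarith
  then have "real n < (real (n div d) + 1) * real d"
    by (simp add: algebra_simps flip: of_nat_mult of_nat_add)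
  also have "\<dots> \<le> 2 * real (n div d) * real d"
    using assms div_greater_zero_iff[of n d] by (intro mult_right_mono) simp_all
  finally show ?thesis
    using \<open>0 < d\<close> by (simp add: divide_le_eq mult.commute mult.left_commute)
qed

lemma limsup_ln_ratio_ge:
  assumes "0 < d" and bound: "\<And>n. 0 < n \<Longrightarrow> (n div d) ^ k \<le> S n"
  shows "ereal (real k) \<le> limsup (\<lambda>n. ereal (ln (real (S n)) / ln (real n)))"
proof -
  have "\<forall>\<^sub>F n in sequentially.
      ereal (real k - real k * ln (2 * real d) / ln (real n)) \<le> ereal (ln (real (S n)) / ln (real n))"
    using eventually_ge_at_top[of "max 2 d"]
  proof eventually_elim
    case (elim n)
    then have "1 < real n" "0 < real n / (2 * real d)"
      using \<open>0 < d\<close> by auto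
    have "(real n / (2 * real d)) ^ k \<le> real (n div d) ^ k"
      using real_div_nat_ge_half[OF \<open>0 < d\<close>] elim \<open>0 < real n / (2 * real d)\<close>
      by (intro power_mono) auto
    also have "\<dots> \<le> real (S n)"
      using bound[of n] elim by (simp flip: of_nat_power)
    finally have "ln ((real n / (2 * real d)) ^ k) \<le> ln (real (S n))"
      using \<open>0 < real n / (2 * real d)\<close> by (intro ln_mono) simp_all
    moreover have "ln ((real n / (2 * real d)) ^ k) = real k * (ln (real n) - ln (2 * real d))"
      using \<open>0 < d\<close> \<open>1 < real n\<close> by (simp add: ln_realpow ln_div)
    ultimately have
      "real k * (ln (real n) - ln (2 * real d)) / ln (real n) \<le> ln (real (S n)) / ln (real n)"
      using \<open>1 < real n\<close> by (intro divide_right_mono) simp_all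
    moreover have "real k * (ln (real n) - ln (2 * real d)) / ln (real n)
        = real k - real k * ln (2 * real d) / ln (real n)"
      using \<open>1 < real n\<close> by (simp add: field_simps)
    ultimately show ?case
      by simp
  qed
  then have "limsup (\<lambda>n. ereal (real k - real k * ln (2 * real d) / ln (real n)))
      \<le> limsup (\<lambda>n. ereal (ln (real (S n)) / ln (real n)))"
    by (rule Limsup_mono)
  moreover have "(\<lambda>n. ereal (real k - real k * ln (2 * real d) / ln (real n))) \<longlonglongrightarrow> ereal (real k - 0)"
    by (intro tendsto_intros tendsto_divide_0[OF tendsto_const] filterlim_at_top_imp_at_infinity
        filterlim_compose[OF ln_at_top filterlim_real_sequentially])
  then have "limsup (\<lambda>n. ereal (real k - real k * ln (2 * real d) / ln (real n))) = ereal (real k)"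
    by (simp add: lim_imp_Limsup)
  ultimately show ?thesis
    by simp
qed

lemma funpow_image_subset: "f ` K \<subseteq> K \<Longrightarrow> (f ^^ k) ` K \<subseteq> K"
  by (induction k) auto

lemma continuous_on_funpow:
  assumes "continuous_on K f" "f ` K \<subseteq> K"
  shows "continuous_on K (f ^^ k)"
proof (induction k)
  case (Suc k)
  then show ?case
    using assms funpow_image_subset[OF assms(2), of k]
    by (simp add: continuous_on_compose2[OF assms(1)])
qed (simp add: continuous_on_id)

lemma funpow_uniform_modulus:
  assumes "compact K" "continuous_on K f" "f ` K \<subseteq> K" "0 < e"
  shows "\<exists>\<delta>>0. \<forall>k<n. \<forall>x\<in>K. \<forall>y\<in>K. dist x y < \<delta> \<longrightarrow> dist ((f ^^ k) x) ((f ^^ k) y) < e"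
proof (induction n)
  case 0
  then show ?case by (intro exI[of _ 1]) auto
next
  case (Suc n)
  then obtain \<delta>\<^sub>1 where "\<delta>\<^sub>1 > 0"
    and \<delta>\<^sub>1: "\<forall>k<n. \<forall>x\<in>K. \<forall>y\<in>K. dist x y < \<delta>\<^sub>1 \<longrightarrow> dist ((f ^^ k) x) ((f ^^ k) y) < e"
    by blast
  have "uniformly_continuous_on K (f ^^ n)"
    using assms by (intro compact_uniformly_continuous continuous_on_funpow)
  then obtain \<delta>\<^sub>2 where "\<delta>\<^sub>2 > 0"
    and \<delta>\<^sub>2: "\<forall>x\<in>K. \<forall>y\<in>K. dist y x < \<delta>\<^sub>2 \<longrightarrow> dist ((f ^^ n) y) ((f ^^ n) x) < e"
    unfolding uniformly_continuous_on_def using \<open>0 < e\<close> by blast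
  have "dist ((f ^^ k) x) ((f ^^ k) y) < e"
    if "k < Suc n" "x \<in> K" "y \<in> K" "dist x y < min \<delta>\<^sub>1 \<delta>\<^sub>2" for k x y
    using that \<delta>\<^sub>1 \<delta>\<^sub>2 less_Suc_eq by auto
  then show ?case
    using \<open>\<delta>\<^sub>1 > 0\<close> \<open>\<delta>\<^sub>2 > 0\<close> by (intro exI[of _ "min \<delta>\<^sub>1 \<delta>\<^sub>2"]) auto
qed

lemma dyn_dist_induced_map_less:
  assumes "0 < n" "0 < e" "A \<subseteq> K" "B \<subseteq> K"
    and modulus: "\<And>k x y. k < n \<Longrightarrow> x \<in> K \<Longrightarrow> y \<in> K \<Longrightarrow> dist x y < \<delta> \<Longrightarrow>
      dist ((f ^^ k) x) ((f ^^ k) y) < e / 2"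
    and AB: "\<forall>x\<in>A. \<exists>y\<in>B. dist x y < \<delta>" and BA: "\<forall>y\<in>B. \<exists>x\<in>A. dist y x < \<delta>"
  shows "dyn_dist hausdorff_dist (induced_map f) n A B < e"
proof (rule dyn_dist_less[OF \<open>0 < n\<close>])
  fix k assume "k < n"
  have "hausdorff_dist ((f ^^ k) ` A) ((f ^^ k) ` B) \<le> e / 2"
  proof (rule hausdorff_dist_le)
    show "\<forall>x\<in>(f ^^ k) ` A. \<exists>y\<in>(f ^^ k) ` B. dist x y \<le> e / 2"
      using AB modulus[OF \<open>k < n\<close>] assms(3,4) by (fastforce intro: less_imp_le)
    show "\<forall>y\<in>(f ^^ k) ` B. \<exists>x\<in>(f ^^ k) ` A. dist y x \<le> e / 2"
      using BA modulus[OF \<open>k < n\<close>] assms(3,4) by (fastforce intro: less_imp_le)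
  qed (use \<open>0 < e\<close> in simp)
  then show "hausdorff_dist ((induced_map f ^^ k) A) ((induced_map f ^^ k) B) < e"
    using \<open>0 < e\<close> by (simp add: induced_map_funpow)
qed

(* Members of a separated family are told apart by the points of a finite (delta/2)-net of K
   lying near them, where delta is a common modulus of continuity of f^0, ..., f^(n-1). *)
lemma separated_set_card_bdd:
  assumes "compact K" "continuous_on K f" "f ` K \<subseteq> K" "Z \<subseteq> Pow K" "0 < n" "0 < e"
  shows "bdd_above {card E | E. separated_set Z hausdorff_dist (induced_map f) n e E}"
proof -
  obtain \<delta> where "\<delta> > 0"
    and modulus: "\<And>k x y. k < n \<Longrightarrow> x \<in> K \<Longrightarrow> y \<in> K \<Longrightarrow> dist x y < \<delta> \<Longrightarrow>
      dist ((f ^^ k) x) ((f ^^ k) y) < e / 2"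
    using funpow_uniform_modulus[OF assms(1-3), of "e / 2" n] \<open>0 < e\<close> by auto
  obtain N where "finite N" "N \<subseteq> K" and cover: "K \<subseteq> (\<Union>p\<in>N. ball p (\<delta> / 2))"
    using seq_compact_imp_totally_bounded[OF compact_imp_seq_compact[OF \<open>compact K\<close>]] \<open>\<delta> > 0\<close>
    by (meson half_gt_zero)
  define trace where "trace A = {p\<in>N. \<exists>x\<in>A. dist p x < \<delta> / 2}" for A
  have close: "\<exists>y\<in>B. dist x y < \<delta>" if "A \<subseteq> K" and eq: "trace A = trace B" and "x \<in> A" for A B x
  proof -
    obtain p where "p \<in> N" "dist p x < \<delta> / 2"
      using cover \<open>A \<subseteq> K\<close> \<open>x \<in> A\<close> by (force simp: dist_commute)
    then have "p \<in> trace B"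
      using eq \<open>x \<in> A\<close> unfolding trace_def by blast
    then obtain y where "y \<in> B" "dist p y < \<delta> / 2"
      unfolding trace_def by blast
    then show ?thesis
      using \<open>dist p x < \<delta> / 2\<close> dist_triangle3[of x y p] by (intro bexI[of _ y]) auto
  qed
  have "card E \<le> 2 ^ card N" if sepE: "separated_set Z hausdorff_dist (induced_map f) n e E" for E
  proof -
    have "inj_on trace E"
    proof (rule inj_onI, rule ccontr)
      fix A B assume "A \<in> E" "B \<in> E" "trace A = trace B" "A \<noteq> B"
      then have "A \<subseteq> K" "B \<subseteq> K"
        using sepE assms(4) by (auto simp: separated_set_def)
      have "dyn_dist hausdorff_dist (induced_map f) n A B < e"
        using close[OF \<open>A \<subseteq> K\<close> \<open>trace A = trace B\<close>] close[OF \<open>B \<subseteq> K\<close> \<open>trace A = trace B\<close>[symmetric]]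
        by (intro dyn_dist_induced_map_less[OF \<open>0 < n\<close> \<open>0 < e\<close> \<open>A \<subseteq> K\<close> \<open>B \<subseteq> K\<close> modulus]) auto
      moreover have "e \<le> dyn_dist hausdorff_dist (induced_map f) n A B"
        using sepE \<open>A \<in> E\<close> \<open>B \<in> E\<close> \<open>A \<noteq> B\<close> unfolding separated_set_def by blast
      ultimately show False
        by simp
    qed
    moreover have "trace ` E \<subseteq> Pow N"
      unfolding trace_def by auto
    ultimately have "card E \<le> card (Pow N)"
      using \<open>finite N\<close> by (metis card_image card_mono finite_Pow_iff)
    then show ?thesis
      using \<open>finite N\<close> by (simp add: card_Pow)
  qed
  then show ?thesis
    by (intro bdd_aboveI[of _ "2 ^ card N"]) auto
qed

section \<open>Arcs along a monotone orbit\<close>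

definition circle_arc :: "real \<Rightarrow> real \<Rightarrow> complex set" where
  "circle_arc u v = circle_point ` {min u v..max u v}"

lemma circle_arc_in_C_circle: "circle_arc u v \<in> C_circle"
proof -
  have "compact (circle_arc u v)" "connected (circle_arc u v)"
    unfolding circle_arc_def
    by (intro compact_continuous_image connected_continuous_image continuous_on_circle_point; simp)+
  then show ?thesis
    unfolding C_circle_def by (auto simp: circle_arc_def compact_imp_closed)
qed

lemma bounded_circle_arc: "bounded (circle_arc u v)"
proof -
  have "circle_arc u v \<subseteq> circle"
    by (auto simp: circle_arc_def)
  then show ?thesis
    by (rule bounded_subset[rotated]) (simp add: circle_def)
qed

lemma circle_arc_nonempty: "circle_arc u v \<noteq> {}"
  by (simp add: circle_arc_def)

lemma circle_point_in_circle_arc: "t \<in> {min u v..max u v} \<Longrightarrow> circle_point t \<in> circle_arc u v"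
  by (simp add: circle_arc_def)

lemma image_circle_arc:
  assumes H: "increasing_lift H" and h: "\<And>t. h (circle_point t) = circle_point (H t)"
  shows "h ` circle_arc u v = circle_arc (H u) (H v)"
proof -
  have "H (min u v) = min (H u) (H v)" "H (max u v) = max (H u) (H v)"
    using H by (auto simp: increasing_lift_def min_def max_def strict_mono_less_eq)
  then have "H ` {min u v..max u v} = {min (H u) (H v)..max (H u) (H v)}"
    using increasing_lift_image_Icc[OF H, of "min u v" "max u v"] by simp
  then show ?thesis
    unfolding circle_arc_def image_image h by (metis image_image)
qed

lemma monotone_orbit_gaps:
  fixes orb :: "int \<Rightarrow> real"
  assumes inside: "\<And>m. orb m \<in> {a<..<a + 1}" and monotone: "mono orb \<or> antimono orb"
    and distinct: "orb (- 1) \<noteq> orb 0"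
  obtains \<delta> where "0 < \<delta>" "\<delta> < 1"
    "\<And>m m' t. m \<le> - 1 \<Longrightarrow> m' \<le> - 1 \<Longrightarrow> t \<in> {min (orb m) (orb m')..max (orb m) (orb m')} \<Longrightarrow>
       \<delta> \<le> \<bar>orb 0 - t\<bar> \<and> \<bar>orb 0 - t\<bar> \<le> 1 - \<delta>"
    "\<And>l t. 0 \<le> l \<Longrightarrow> t \<in> {min (orb 0) (orb l)..max (orb 0) (orb l)} \<Longrightarrow>
       \<delta> \<le> \<bar>orb (- 1) - t\<bar> \<and> \<bar>orb (- 1) - t\<bar> \<le> 1 - \<delta>"
    "\<And>m m'. m \<le> - 1 \<Longrightarrow> - 1 \<le> m' \<Longrightarrow> orb (- 1) \<in> {min (orb m) (orb m')..max (orb m) (orb m')}"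
proof -
  define x0 x1 where "x0 = orb 0" and "x1 = orb (- 1)"
  define \<delta> where "\<delta> = min \<bar>x1 - x0\<bar> (min (min (x0 - a) (a + 1 - x0)) (min (x1 - a) (a + 1 - x1)))"
  have "0 < \<delta>" "\<delta> < 1"
    using inside[of 0] inside[of "- 1"] distinct by (auto simp: \<delta>_def x0_def x1_def)
  have order: "(orb m \<le> orb m' \<and> x1 < x0) \<or> (orb m' \<le> orb m \<and> x0 < x1)" if "m \<le> m'" for m m'
  proof (cases "mono orb")
    case True
    then have "orb m \<le> orb m'" "x1 \<le> x0"
      using that unfolding x0_def x1_def by (simp_all add: monoD)
    then show ?thesis
      using distinct unfolding x0_def x1_def by simp
  next
    case False
    then have "antimono orb"
      using monotone by simp
    then have "orb m' \<le> orb m" "x0 \<le> x1"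
      using that unfolding x0_def x1_def by (simp_all add: antimonoD)
    then show ?thesis
      using distinct unfolding x0_def x1_def by simp
  qed
  have bounds: "a < orb m" "orb m < a + 1" for m
    using inside[of m] by auto
  have margins: "a + \<delta> \<le> x0" "x0 \<le> a + 1 - \<delta>" "a + \<delta> \<le> x1" "x1 \<le> a + 1 - \<delta>" "\<delta> \<le> \<bar>x1 - x0\<bar>"
    by (auto simp: \<delta>_def)
  show ?thesis
  proof (rule that[OF \<open>0 < \<delta>\<close> \<open>\<delta> < 1\<close>])
    fix m m' :: int and t
    assume "m \<le> - 1" "m' \<le> - 1" "t \<in> {min (orb m) (orb m')..max (orb m) (orb m')}"
    then show "\<delta> \<le> \<bar>orb 0 - t\<bar> \<and> \<bar>orb 0 - t\<bar> \<le> 1 - \<delta>"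
      using order[of m "- 1"] order[of m' "- 1"] bounds[of m] bounds[of m'] margins
      unfolding x0_def x1_def by (auto simp: abs_if)
  next
    fix l :: int and t assume "0 \<le> l" "t \<in> {min (orb 0) (orb l)..max (orb 0) (orb l)}"
    then show "\<delta> \<le> \<bar>orb (- 1) - t\<bar> \<and> \<bar>orb (- 1) - t\<bar> \<le> 1 - \<delta>"
      using order[of 0 l] bounds[of l] margins unfolding x0_def x1_def by (auto simp: abs_if)
  next
    fix m m' :: int assume "m \<le> - 1" "- 1 \<le> m'"
    then show "orb (- 1) \<in> {min (orb m) (orb m')..max (orb m) (orb m')}"
      using order[of m "- 1"] order[of "- 1" m'] by (auto simp: x1_def)
  qed
qed

definition orbit_arcs_apart :: "real \<Rightarrow> (int \<Rightarrow> real) \<Rightarrow> bool" where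
  "orbit_arcs_apart c orb \<longleftrightarrow>
     (\<forall>l m m'. m \<le> - 1 \<longrightarrow> m' \<le> - 1 \<longrightarrow>
        c \<le> hausdorff_dist (circle_arc (orb l) (orb 0)) (circle_arc (orb m) (orb m'))) \<and>
     (\<forall>l m m'. 0 \<le> l \<longrightarrow> m \<le> - 1 \<longrightarrow> - 1 \<le> m' \<longrightarrow>
        c \<le> hausdorff_dist (circle_arc (orb m) (orb m')) (circle_arc (orb 0) (orb l)))"

lemma monotone_orbit_arcs_apart:
  fixes orb :: "int \<Rightarrow> real"
  assumes "\<And>m. orb m \<in> {a<..<a + 1}" "mono orb \<or> antimono orb" "orb (- 1) \<noteq> orb 0"
  obtains c where "0 < c" "orbit_arcs_apart c orb"
proof -
  obtain \<delta> where "0 < \<delta>" "\<delta> < 1"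
    and before: "\<And>m m' t. m \<le> - 1 \<Longrightarrow> m' \<le> - 1 \<Longrightarrow> t \<in> {min (orb m) (orb m')..max (orb m) (orb m')} \<Longrightarrow>
       \<delta> \<le> \<bar>orb 0 - t\<bar> \<and> \<bar>orb 0 - t\<bar> \<le> 1 - \<delta>"
    and after: "\<And>l t. 0 \<le> l \<Longrightarrow> t \<in> {min (orb 0) (orb l)..max (orb 0) (orb l)} \<Longrightarrow>
       \<delta> \<le> \<bar>orb (- 1) - t\<bar> \<and> \<bar>orb (- 1) - t\<bar> \<le> 1 - \<delta>"
    and between: "\<And>m m'. m \<le> - 1 \<Longrightarrow> - 1 \<le> m' \<Longrightarrow>
       orb (- 1) \<in> {min (orb m) (orb m')..max (orb m) (orb m')}"
    using monotone_orbit_gaps[OF assms] by blast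
  define c where "c = 2 * sin (pi * \<delta>)"
  have far: "c \<le> dist (circle_point s) (circle_point t)" if "\<delta> \<le> \<bar>s - t\<bar> \<and> \<bar>s - t\<bar> \<le> 1 - \<delta>" for s t
    unfolding c_def using \<open>0 < \<delta>\<close> that by (intro dist_circle_point_ge) auto
  have "orbit_arcs_apart c orb"
    unfolding orbit_arcs_apart_def
  proof (intro conjI allI impI)
    fix l m m' :: int assume "m \<le> - 1" "m' \<le> - 1"
    show "c \<le> hausdorff_dist (circle_arc (orb l) (orb 0)) (circle_arc (orb m) (orb m'))"
    proof (rule hausdorff_dist_ge[OF bounded_circle_arc bounded_circle_arc _ circle_arc_nonempty])
      show "circle_point (orb 0) \<in> circle_arc (orb l) (orb 0)"
        by (rule circle_point_in_circle_arc) auto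
      show "\<forall>b\<in>circle_arc (orb m) (orb m'). c \<le> dist (circle_point (orb 0)) b"
        using before[OF \<open>m \<le> - 1\<close> \<open>m' \<le> - 1\<close>] far unfolding circle_arc_def by blast
    qed
  next
    fix l m m' :: int assume "0 \<le> l" "m \<le> - 1" "- 1 \<le> m'"
    show "c \<le> hausdorff_dist (circle_arc (orb m) (orb m')) (circle_arc (orb 0) (orb l))"
    proof (rule hausdorff_dist_ge[OF bounded_circle_arc bounded_circle_arc _ circle_arc_nonempty])
      show "circle_point (orb (- 1)) \<in> circle_arc (orb m) (orb m')"
        by (rule circle_point_in_circle_arc[OF between[OF \<open>m \<le> - 1\<close> \<open>- 1 \<le> m'\<close>]])
      show "\<forall>b\<in>circle_arc (orb 0) (orb l). c \<le> dist (circle_point (orb (- 1))) b"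
        using after[OF \<open>0 \<le> l\<close>] far unfolding circle_arc_def by blast
    qed
  qed
  moreover have "0 < c"
    unfolding c_def using \<open>0 < \<delta>\<close> \<open>\<delta> < 1\<close> by (simp add: sin_gt_zero)
  ultimately show ?thesis
    using that by blast
qed

definition orbit_arc :: "(int \<Rightarrow> real) \<Rightarrow> nat \<times> nat \<Rightarrow> complex set" where
  "orbit_arc orb = (\<lambda>(i, j). circle_arc (orb (- int j)) (orb (- int i)))"

lemma induced_map_funpow_orbit_arc:
  fixes orb :: "int \<Rightarrow> real"
  assumes G: "increasing_lift G"
    and f_G: "\<And>m t. (f ^^ (q * m)) (circle_point t) = circle_point ((G ^^ m) t)"
    and step: "\<And>m. orb (m + 1) = G (orb m)"
  shows "(induced_map f ^^ (q * k)) (orbit_arc orb (i, j))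
    = circle_arc (orb (int k - int j)) (orb (int k - int i))"
proof -
  have orbit_shift: "(G ^^ k) (orb m) = orb (m + int k)" for m
    by (induction k) (simp_all add: step[of "m + int _", symmetric] add.assoc add.commute[of 1])
  show ?thesis
    using image_circle_arc[OF increasing_lift_funpow[OF G, of k], of "f ^^ (q * k)"] f_G
    by (simp add: orbit_arc_def induced_map_funpow orbit_shift algebra_simps)
qed

lemma orbit_arcs_separated_in_time:
  fixes orb :: "int \<Rightarrow> real"
  assumes G: "increasing_lift G" and "0 < q"
    and f_G: "\<And>m t. (f ^^ (q * m)) (circle_point t) = circle_point ((G ^^ m) t)"
    and step: "\<And>m. orb (m + 1) = G (orb m)" and apart: "orbit_arcs_apart c orb"
    and P: "p \<in> {..<M} \<times> {M..<2 * M}" "p' \<in> {..<M} \<times> {M..<2 * M}" "p \<noteq> p'"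
  shows "\<exists>k < 2 * q * M.
    c \<le> hausdorff_dist ((induced_map f ^^ k) (orbit_arc orb p)) ((induced_map f ^^ k) (orbit_arc orb p'))"
proof -
  note later = induced_map_funpow_orbit_arc[where f = f and q = q and orb = orb, OF G f_G step]
  define sep_at where "sep_at p p' \<longleftrightarrow> (\<exists>k < 2 * q * M.
    c \<le> hausdorff_dist ((induced_map f ^^ k) (orbit_arc orb p)) ((induced_map f ^^ k) (orbit_arc orb p')))"
    for p p'
  have sym: "sep_at p p' \<longleftrightarrow> sep_at p' p" for p p'
    unfolding sep_at_def by (simp add: hausdorff_dist_commute)
  have in_time: "q * j < 2 * q * M" if "j < 2 * M" for j
    using \<open>0 < q\<close> that by simp
  have earlier_start: "sep_at (i, j) (i', j')" if "i < i'" "i' < M" "M \<le> j'" for i j i' j'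
  proof -
    have "c \<le> hausdorff_dist (circle_arc (orb (int i - int j)) (orb 0))
        (circle_arc (orb (int i - int j')) (orb (int i - int i')))"
      using apart that unfolding orbit_arcs_apart_def by auto
    then show ?thesis
      unfolding sep_at_def using in_time[of i] that by (intro exI[of _ "q * i"]) (simp add: later)
  qed
  have earlier_end: "sep_at (i, j') (i, j)" if "i < M" "M \<le> j" "j < j'" "j' < 2 * M" for i j j'
  proof -
    have "c \<le> hausdorff_dist (circle_arc (orb (int j - int j')) (orb (int j - int i)))
        (circle_arc (orb 0) (orb (int j - int i)))"
      using apart that unfolding orbit_arcs_apart_def by auto
    then show ?thesis
      unfolding sep_at_def using in_time[of j] that by (intro exI[of _ "q * j"]) (simp add: later)
  qed
  obtain i j i' j' where p: "p = (i, j)" "p' = (i', j')"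
    by fastforce
  consider "i < i'" | "i' < i" | "i = i'" "j < j'" | "i = i'" "j' < j"
    using \<open>p \<noteq> p'\<close> unfolding p by (metis linorder_neqE_nat)
  then have "sep_at p p'"
  proof cases
    case 1
    then show ?thesis using P earlier_start[of i i' j' j] unfolding p by auto
  next
    case 2
    then show ?thesis using P earlier_start[of i' i j j'] sym[of p p'] unfolding p by auto
  next
    case 3
    then show ?thesis using P earlier_end[of i j j'] sym[of p p'] unfolding p by auto
  next
    case 4
    then show ?thesis using P earlier_end[of i j' j] unfolding p by auto
  qed
  then show ?thesis
    unfolding sep_at_def .
qed

lemma sep_induced_map_ge_square:
  fixes orb :: "int \<Rightarrow> real"
  assumes bdd: "bdd_above {card E | E. separated_set C_circle hausdorff_dist (induced_map f) n e E}"
    and G: "increasing_lift G" and "0 < q"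
    and f_G: "\<And>m t. (f ^^ (q * m)) (circle_point t) = circle_point ((G ^^ m) t)"
    and step: "\<And>m. orb (m + 1) = G (orb m)" and apart: "orbit_arcs_apart c orb"
    and "0 < c" "e \<le> c"
  shows "(n div (2 * q)) ^ 2 \<le> sep C_circle hausdorff_dist (induced_map f) n e"
proof -
  define M where "M = n div (2 * q)"
  define P where "P = {..<M} \<times> {M..<2 * M}"
  have "2 * q * M \<le> n"
    unfolding M_def by (metis div_times_less_eq_dividend mult.commute)
  then have separated: "\<exists>k<n.
      c \<le> hausdorff_dist ((induced_map f ^^ k) (orbit_arc orb p)) ((induced_map f ^^ k) (orbit_arc orb p'))"
    if "p \<in> P" "p' \<in> P" "p \<noteq> p'" for p p'
    using orbit_arcs_separated_in_time[OF G \<open>0 < q\<close> f_G step apart, of p M p'] that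
    unfolding P_def by (meson order_less_le_trans)
  have self: "hausdorff_dist X X \<le> 0" for X
    by (rule hausdorff_dist_le) auto
  have "inj_on (orbit_arc orb) P"
  proof (rule inj_onI, rule ccontr)
    fix p p' assume "p \<in> P" "p' \<in> P" "orbit_arc orb p = orbit_arc orb p'" "p \<noteq> p'"
    then obtain k where
      "c \<le> hausdorff_dist ((induced_map f ^^ k) (orbit_arc orb p)) ((induced_map f ^^ k) (orbit_arc orb p'))"
      using separated by blast
    then show False
      using self[of "(induced_map f ^^ k) (orbit_arc orb p)"] \<open>0 < c\<close> \<open>orbit_arc orb p = orbit_arc orb p'\<close>
      by simp
  qed
  then have "card (orbit_arc orb ` P) = M ^ 2"
    by (simp add: card_image P_def power2_eq_square)
  moreover have "separated_set C_circle hausdorff_dist (induced_map f) n e (orbit_arc orb ` P)"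
    unfolding separated_set_def
  proof (intro conjI ballI impI)
    show "orbit_arc orb ` P \<subseteq> C_circle"
      by (auto simp: orbit_arc_def circle_arc_in_C_circle)
    show "finite (orbit_arc orb ` P)"
      by (simp add: P_def)
    fix A B assume "A \<in> orbit_arc orb ` P" "B \<in> orbit_arc orb ` P" "A \<noteq> B"
    then obtain k where "k < n"
      "c \<le> hausdorff_dist ((induced_map f ^^ k) A) ((induced_map f ^^ k) B)"
      using separated by blast
    then show "e \<le> dyn_dist hausdorff_dist (induced_map f) n A B"
      using \<open>e \<le> c\<close> by (intro dyn_dist_ge[of k]) auto
  qed
  ultimately show ?thesis
    using card_le_sep[OF bdd] unfolding M_def by metis
qed

theorem proposition2:
  fixes f :: "complex \<Rightarrow> complex"
  assumes "orient_pres_homeo f"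
    and "rational_rotation_number f"
    and "\<not> conj_to_rotation f"
  shows "pol_entropy C_circle hausdorff_dist (induced_map f) \<ge> 2"
proof -
  obtain G q a x where G: "increasing_lift G" and "0 < q"
    and f_G: "\<And>m t. (f ^^ (q * m)) (circle_point t) = circle_point ((G ^^ m) t)"
    and "G a = a" "a \<le> x" "x < a + 1" "G x \<noteq> x"
    using rational_rotation_number_reduction[OF assms(2,3)] by blast
  obtain orb :: "int \<Rightarrow> real" where step: "\<And>m. orb (m + 1) = G (orb m)"
    and "\<And>m. orb m \<in> {a<..<a + 1}" "mono orb \<or> antimono orb" "orb (- 1) \<noteq> orb 0"
    using increasing_lift_monotone_orbit[OF G \<open>G a = a\<close> \<open>a \<le> x\<close> \<open>x < a + 1\<close> \<open>G x \<noteq> x\<close>] by blast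
  then obtain c where "0 < c" "orbit_arcs_apart c orb"
    using monotone_orbit_arcs_apart by blast
  have "continuous_on circle f" "f ` circle \<subseteq> circle"
    using assms(1) unfolding orient_pres_homeo_def homeomorphism_def by auto
  then have bdd: "\<And>n \<epsilon>. 0 < n \<Longrightarrow> 0 < \<epsilon> \<Longrightarrow>
      bdd_above {card E | E. separated_set C_circle hausdorff_dist (induced_map f) n \<epsilon> E}"
    by (intro separated_set_card_bdd[of circle]) (auto simp: circle_def C_circle_def)
  have "(n div (2 * q)) ^ 2 \<le> sep C_circle hausdorff_dist (induced_map f) n c" if "0 < n" for n
    by (rule sep_induced_map_ge_square[OF bdd[OF that \<open>0 < c\<close>] G \<open>0 < q\<close> f_G step
          \<open>orbit_arcs_apart c orb\<close> \<open>0 < c\<close> order_refl])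
  then have "ereal (real 2)
      \<le> limsup (\<lambda>n. ereal (ln (real (sep C_circle hausdorff_dist (induced_map f) n c)) / ln (real n)))"
    using \<open>0 < q\<close> by (intro limsup_ln_ratio_ge[of "2 * q"]) auto
  then show ?thesis
    using pol_entropy_ge[OF bdd \<open>0 < c\<close>] by simp
qed

end
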